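(* Let $r<0$ be an integer and let $f(x)=\sum_{i=0}^{-r}\gamma_ix^i\in\mathbb{K}[x]$. Then $$\sum_{i=0}^m\binom{m}{i}\binom{1-r}{m+i}^{-1}\gamma_{m+i-1}=0\quad\text{for all }1\le m\le\lceil -r/2\rceil$$ if and only if there exist $\delta_0,\dots,\delta_{\lfloor -r/2\rfloor}\in\mathbb{K}$ with $$f(x)=(x-2)^{-r}\sum_{i=0}^{\lfloor -r/2\rfloor}\delta_i\left(\frac{x}{x-2}\right)^{2i}=\sum_{i=0}^{\lfloor -r/2\rfloor}\delta_i\,x^{2i}(x-2)^{-r-2i}.$$
   Context: $\mathbb{K}\in\{\mathbb{Q},\mathbb{R},\mathbb{C}\}$. *)

theory Defs
  imports "HOL-Computational_Algebra.Polynomial"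
begin

end

theory Submission
  imports Defs
begin

text \<open>
  With \<open>n = -r\<close>, the \<open>m\<close>-th condition is a linear functional \<open>L\<^sub>m\<close> on polynomials of
  degree at most \<open>n\<close>. The involutive substitution \<open>g \<mapsto> (1 - x)^n g(x / (x - 1))\<close> sends
  \<open>x^k\<close> to \<open>(-1)^k x^k (1 - x)^(n - k)\<close>, and an alternating Vandermonde identity shows that it
  reverses the sign of every \<open>L\<^sub>m\<close> with \<open>2m \<le> n + 1\<close>. The polynomials \<open>x^(2i) (x - 2)^(n - 2i)\<close>
  are fixed by the substitution, hence killed by all \<open>L\<^sub>m\<close>. Conversely, their lowest terms are
  \<open>x^(2i)\<close>, so some combination of them agrees with \<open>f\<close> in all even coefficients; the
  difference has only odd coefficients, and the \<open>L\<^sub>m\<close> are triangular in these with pivot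
  \<open>x^(2m - 1)\<close>, so the difference vanishes.
\<close>

lemma coeff_linear_poly_power_eq:
  fixes a b :: "'a::comm_semiring_1"
  shows "coeff ([:a, b:] ^ p) t = of_nat (p choose t) * b ^ t * a ^ (p - t)"
proof (cases "t \<le> p")
  case True
  then show ?thesis by (rule coeff_linear_poly_power)
next
  case False
  have "degree ([:a, b:] ^ p) \<le> 1 * p"
    by (rule order.trans[OF degree_power_le]) simp
  then have "coeff ([:a, b:] ^ p) t = 0"
    using False by (intro coeff_eq_0) simp
  then show ?thesis
    using False by (simp add: binomial_eq_0)
qed

lemma coeff_x_power_mult:
  "coeff ([:0, 1:] ^ k * g) e = (if e < k then 0 else coeff g (e - k))"
  by (simp flip: monom_altdef[of 1, simplified] add: coeff_monom_mult)

lemma coeff_x_power: "coeff ([:0, 1:] ^ k) e = (if e = k then 1 else 0)"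
  by (simp flip: monom_altdef[of 1, simplified] add: coeff_monom)

lemma neg_one_power_eq_if_even_add:
  "even (a + b) \<Longrightarrow> (-1 :: 'a::ring_1) ^ a = (-1) ^ b"
  by (auto simp: minus_one_power_iff)

lemma nat_ceiling_half: "nat \<lceil>of_nat n / (2::rat)\<rceil> = (n + 1) div 2"
proof -
  have "\<lceil>of_nat n / (2::rat)\<rceil> = int ((n + 1) div 2)"
    by (rule ceiling_unique; cases "even n") (auto elim!: evenE oddE simp: field_simps)
  then show ?thesis by simp
qed

lemma nat_floor_half: "nat \<lfloor>of_nat n / (2::rat)\<rfloor> = n div 2"
proof -
  have "\<lfloor>of_nat n / (2::rat)\<rfloor> = int (n div 2)"
    by (rule floor_unique; cases "even n") (auto elim!: evenE oddE simp: field_simps)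
  then show ?thesis by simp
qed

lemma x_power_mult_linear_power:
  "([:0, 1:] ^ k * [:c, 1:] ^ a :: 'a::comm_ring_1 poly) =
     (\<Sum>s\<le>a. smult (of_nat (a choose s) * c ^ (a - s)) ([:0, 1:] ^ (k + s)))"
proof -
  have "([:0, 1:] ^ k * [:c, 1:] ^ a :: 'a poly) = [:0, 1:] ^ k * ([:0, 1:] + [:c:]) ^ a"
    by simp
  also have "\<dots> = (\<Sum>s\<le>a. [:0, 1:] ^ k * (of_nat (a choose s) * [:0, 1:] ^ s * [:c:] ^ (a - s)))"
    by (simp only: binomial_ring sum_distrib_left)
  also have "\<dots> = (\<Sum>s\<le>a. smult (of_nat (a choose s) * c ^ (a - s)) ([:0, 1:] ^ (k + s)))"
    by (intro sum.cong refl) (simp add: of_nat_poly poly_const_pow power_add mult_ac)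
  finally show ?thesis .
qed

lemma degree_x_power_mult_linear_power_le:
  "degree ([:0, 1:] ^ k * [:c, 1:] ^ a :: 'a::comm_semiring_1 poly) \<le> k + a"
  by (intro order.trans[OF degree_mult_le] add_mono order.trans[OF degree_power_le]) simp_all

text \<open>Vandermonde-type identity, read off from the coefficient of \<open>x\<^sup>q\<close> in
  \<open>x\<^sup>m (1 + x)\<^sup>m = ((1 + x) - 1)\<^sup>m (1 + x)\<^sup>m\<close>.\<close>

lemma alternating_sum_choose_mult_choose:
  "(\<Sum>i = 0..m. of_nat (m choose i) * (-1 :: 'a::comm_ring_1) ^ (m - i) * of_nat ((m + i) choose q))
     = (if m \<le> q then of_nat (m choose (q - m)) else 0)"
proof -
  define y :: "'a poly" where "y = [:1, 1:]"
  have "[:0, 1:] ^ m * y ^ m = y ^ m * (y + [:-1:]) ^ m"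
    by (simp add: y_def mult.commute)
  also have "\<dots> = (\<Sum>i\<le>m. smult (of_nat (m choose i) * (-1) ^ (m - i)) (y ^ (m + i)))"
    by (simp add: binomial_ring sum_distrib_left of_nat_poly poly_const_pow power_add mult_ac)
  finally have "coeff ([:0, 1:] ^ m * y ^ m) q =
      coeff (\<Sum>i\<le>m. smult (of_nat (m choose i) * (-1) ^ (m - i)) (y ^ (m + i))) q"
    by simp
  moreover have "coeff ([:0, 1:] ^ m * y ^ m) q = (if m \<le> q then of_nat (m choose (q - m)) else 0)"
    by (simp add: coeff_x_power_mult coeff_linear_poly_power_eq y_def)
  ultimately show ?thesis
    by (simp add: coeff_sum coeff_linear_poly_power_eq y_def atLeast0AtMost)
qed

definition condition_functional :: "nat \<Rightarrow> nat \<Rightarrow> 'a::field poly \<Rightarrow> 'a" where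
  "condition_functional n m g =
     (\<Sum>i = 0..m. of_nat (m choose i) / of_nat ((n + 1) choose (m + i)) * coeff g (m + i - 1))"

lemma condition_functional_diff:
  "condition_functional n m (p - q) = condition_functional n m p - condition_functional n m q"
  by (simp add: condition_functional_def sum_subtractf algebra_simps)

lemma condition_functional_smult:
  "condition_functional n m (smult c p) = c * condition_functional n m p"
  by (simp add: condition_functional_def sum_distrib_left mult_ac)

lemma condition_functional_sum:
  "condition_functional n m (sum f A) = (\<Sum>x\<in>A. condition_functional n m (f x))"
  unfolding condition_functional_def coeff_sum sum_distrib_left by (rule sum.swap)

lemma condition_functional_x_power:
  assumes "1 \<le> m"
  shows "condition_functional n m ([:0, 1:] ^ k) =
    (if m \<le> k + 1 then of_nat (m choose (k + 1 - m)) else 0) / of_nat ((n + 1) choose (k + 1))"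
proof -
  have "condition_functional n m ([:0, 1:] ^ k) =
      (\<Sum>i = 0..m. if i = k + 1 - m \<and> m \<le> k + 1
         then of_nat (m choose i) / of_nat ((n + 1) choose (m + i)) else 0)"
    unfolding condition_functional_def
    by (intro sum.cong refl) (use assms in \<open>auto simp: coeff_x_power\<close>)
  also have "\<dots> = (if m \<le> k + 1 then of_nat (m choose (k + 1 - m)) else 0) / of_nat ((n + 1) choose (k + 1))"
    using assms by (auto simp: binomial_eq_0)
  finally show ?thesis .
qed

lemma condition_functional_bernstein:
  fixes n m k :: nat
  assumes "k \<le> n" "1 \<le> m" "2 * m \<le> n + 1"
  shows "condition_functional n m ([:0, 1:] ^ k * [:1, -1:] ^ (n - k) :: 'a::field_char_0 poly) =
    (-1) ^ (k + 1) * condition_functional n m ([:0, 1:] ^ k)"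
proof -
  define D :: 'a where "D = of_nat ((n + 1) choose (k + 1))"
  have "(n + 1) choose (k + 1) \<noteq> 0"
    using assms(1) by simp
  then have "D \<noteq> 0"
    unfolding D_def by (metis of_nat_eq_0_iff)
  have term_eq: "of_nat (m choose i) / of_nat ((n + 1) choose (m + i)) *
        coeff ([:0, 1:] ^ k * [:1, -1:] ^ (n - k) :: 'a poly) (m + i - 1)
      = (-1) ^ (k + 1) / D * (of_nat (m choose i) * (-1) ^ (m - i) * of_nat ((m + i) choose (k + 1)))"
    if "i \<le> m" for i
  proof (cases "m + i < k + 1")
    case True
    then have "m + i - 1 < k"
      using assms(2) by linarith
    with True show ?thesis
      by (simp add: coeff_x_power_mult binomial_eq_0)
  next
    case False
    have "m + i \<le> n + 1"
      using that assms(3) by simp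
    then have "((n + 1) choose (m + i)) * ((m + i) choose (k + 1)) =
        ((n + 1) choose (k + 1)) * ((n - k) choose (m + i - 1 - k))"
      using False by (subst choose_mult) (auto simp: diff_diff_add)
    then have choose_eq: "of_nat ((n + 1) choose (m + i)) * of_nat ((m + i) choose (k + 1)) =
        D * (of_nat ((n - k) choose (m + i - 1 - k)) :: 'a)"
      unfolding D_def by (metis of_nat_mult)
    have "(-1 :: 'a) ^ (m + i - 1 - k) = (-1) ^ (k + 1 + (m - i))"
      using that False by (intro neg_one_power_eq_if_even_add) auto
    then have "coeff ([:0, 1:] ^ k * [:1, -1:] ^ (n - k) :: 'a poly) (m + i - 1) =
        of_nat ((n - k) choose (m + i - 1 - k)) * (-1) ^ (k + 1) * (-1) ^ (m - i)"
      using False by (simp add: coeff_x_power_mult coeff_linear_poly_power_eq power_add)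
    moreover have "of_nat ((n + 1) choose (m + i)) \<noteq> (0 :: 'a)"
      using \<open>m + i \<le> n + 1\<close> by simp
    ultimately show ?thesis
      using choose_eq \<open>D \<noteq> 0\<close> by (simp add: field_simps)
  qed
  have "condition_functional n m ([:0, 1:] ^ k * [:1, -1:] ^ (n - k) :: 'a poly) =
      (-1) ^ (k + 1) / D *
        (\<Sum>i = 0..m. of_nat (m choose i) * (-1) ^ (m - i) * of_nat ((m + i) choose (k + 1)))"
    unfolding condition_functional_def sum_distrib_left by (intro sum.cong refl term_eq) simp
  also have "\<dots> = (-1) ^ (k + 1) * condition_functional n m ([:0, 1:] ^ k)"
    using assms(2) by (simp add: alternating_sum_choose_mult_choose condition_functional_x_power D_def)
  finally show ?thesis .
qed

lemma smult_sum_right: "smult c (sum f A) = (\<Sum>x\<in>A. smult c (f x))"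
  by (induction A rule: infinite_finite_induct) (simp_all add: smult_add_right)

text \<open>For \<open>degree g \<le> n\<close> this is \<open>(1 - x)\<^sup>n g (x / (x - 1))\<close>.\<close>

definition moebius_subst :: "nat \<Rightarrow> 'a::comm_ring_1 poly \<Rightarrow> 'a poly" where
  "moebius_subst n g = (\<Sum>k\<le>n. smult ((-1) ^ k * coeff g k) ([:0, 1:] ^ k * [:1, -1:] ^ (n - k)))"

lemma moebius_subst_smult: "moebius_subst n (smult c g) = smult c (moebius_subst n g)"
  by (simp add: moebius_subst_def smult_sum_right mult_ac)

lemma moebius_subst_sum: "moebius_subst n (sum f A) = (\<Sum>x\<in>A. moebius_subst n (f x))"
  unfolding moebius_subst_def coeff_sum sum_distrib_left smult_sum by (rule sum.swap)

lemma moebius_subst_x_power: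
  assumes "k \<le> n"
  shows "moebius_subst n ([:0, 1:] ^ k) = smult ((-1) ^ k) ([:0, 1:] ^ k * [:1, -1:] ^ (n - k))"
proof -
  have "moebius_subst n ([:0, 1:] ^ k) =
      (\<Sum>e\<le>n. if e = k then smult ((-1) ^ k) ([:0, 1:] ^ k * [:1, -1:] ^ (n - k)) else 0)"
    unfolding moebius_subst_def by (intro sum.cong refl) (simp add: coeff_x_power)
  then show ?thesis
    using assms by simp
qed

lemma condition_functional_moebius_subst:
  fixes g :: "'a::field_char_0 poly"
  assumes "degree g \<le> n" "1 \<le> m" "2 * m \<le> n + 1"
  shows "condition_functional n m (moebius_subst n g) = - condition_functional n m g"
proof -
  have "condition_functional n m (moebius_subst n g) =
      (\<Sum>k\<le>n. (-1) ^ k * coeff g k * ((-1) ^ (k + 1) * condition_functional n m ([:0, 1:] ^ k)))"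
    unfolding moebius_subst_def condition_functional_sum condition_functional_smult
    using assms by (intro sum.cong refl) (simp add: condition_functional_bernstein)
  also have "\<dots> = - (\<Sum>k\<le>n. condition_functional n m (monom (coeff g k) k))"
  proof -
    have "(-1 :: 'a) ^ k * (-1) ^ (k + 1) = -1" for k
      by (simp add: minus_one_power_iff)
    then show ?thesis
      by (simp add: monom_altdef condition_functional_smult sum_negf mult_ac)
  qed
  also have "\<dots> = - condition_functional n m g"
    using arg_cong[OF poly_as_sum_of_monoms'[OF assms(1)], of "condition_functional n m"]
    by (simp only: condition_functional_sum)
  finally show ?thesis .
qed

lemma moebius_subst_x_power_mult_x_minus_2_power:
  assumes "k + a = n"
  shows "moebius_subst n ([:0, 1:] ^ k * [:-2, 1:] ^ a :: 'a::comm_ring_1 poly) =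
    smult ((-1) ^ k) ([:0, 1:] ^ k * [:-2, 1:] ^ a)"
proof -
  have "moebius_subst n ([:0, 1:] ^ k * [:-2, 1:] ^ a :: 'a poly) =
      (\<Sum>s\<le>a. smult (of_nat (a choose s) * (-2) ^ (a - s) * (-1) ^ (k + s))
        ([:0, 1:] ^ (k + s) * [:1, -1:] ^ (a - s)))"
    unfolding x_power_mult_linear_power moebius_subst_sum moebius_subst_smult
    using assms by (intro sum.cong refl) (auto simp: moebius_subst_x_power)
  also have "\<dots> = smult ((-1) ^ k) ([:0, 1:] ^ k *
      (\<Sum>s\<le>a. of_nat (a choose s) * [:0, -1:] ^ s * [:-2, 2:] ^ (a - s)))"
  proof -
    have "[:0, -1:] ^ s = smult ((-1) ^ s) ([:0, 1 :: 'a:] ^ s)" for s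
      by (simp flip: smult_power)
    moreover have "[:-2, 2:] ^ s = smult ((-2) ^ s) ([:1, -1 :: 'a:] ^ s)" for s
      by (simp flip: smult_power)
    ultimately show ?thesis
      unfolding smult_sum_right sum_distrib_left
      by (intro sum.cong refl) (simp add: of_nat_poly power_add mult_ac)
  qed
  also have "[:0, -1:] + [:-2, 2:] = [:-2, 1 :: 'a:]"
    by simp
  then have "(\<Sum>s\<le>a. of_nat (a choose s) * [:0, -1:] ^ s * [:-2, 2:] ^ (a - s)) = [:-2, 1 :: 'a:] ^ a"
    by (simp flip: binomial_ring)
  finally show ?thesis .
qed

lemma condition_functional_x_power_mult_x_minus_2_power:
  fixes j n m :: nat
  assumes "2 * j \<le> n" "1 \<le> m" "2 * m \<le> n + 1"
  shows "condition_functional n m ([:0, 1:] ^ (2 * j) * [:-2, 1:] ^ (n - 2 * j) :: 'a::field_char_0 poly) = 0"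
proof -
  define b :: "'a poly" where "b = [:0, 1:] ^ (2 * j) * [:-2, 1:] ^ (n - 2 * j)"
  have "degree b \<le> n"
    unfolding b_def using assms(1) degree_x_power_mult_linear_power_le[of "2 * j" "-2" "n - 2 * j"]
    by simp
  have "moebius_subst n b = b"
    using assms(1) by (simp add: b_def moebius_subst_x_power_mult_x_minus_2_power)
  then have "condition_functional n m b = - condition_functional n m b"
    using condition_functional_moebius_subst[OF \<open>degree b \<le> n\<close> assms(2,3)] by simp
  then show ?thesis
    by (simp add: b_def)
qed

lemma exists_combination_matching_even_coeffs:
  fixes b :: "nat \<Rightarrow> 'a::field poly"
  assumes lower: "\<And>i j. j < i \<Longrightarrow> coeff (b i) (2 * j) = 0"
    and pivot: "\<And>i. i \<le> K \<Longrightarrow> coeff (b i) (2 * i) \<noteq> 0"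
  shows "\<exists>\<delta>. \<forall>j\<le>K. coeff (\<Sum>i = 0..K. smult (\<delta> i) (b i)) (2 * j) = coeff f (2 * j)"
proof -
  define G where "G \<delta> = (\<Sum>i = 0..K. smult (\<delta> i) (b i))" for \<delta>
  have "\<exists>\<delta>. \<forall>j<J. coeff (G \<delta>) (2 * j) = coeff f (2 * j)" if "J \<le> K + 1" for J
    using that
  proof (induction J)
    case 0
    then show ?case by simp
  next
    case (Suc J)
    then obtain \<delta> where IH: "\<forall>j<J. coeff (G \<delta>) (2 * j) = coeff f (2 * j)"
      by auto
    define t where "t = (coeff f (2 * J) - coeff (G \<delta>) (2 * J)) / coeff (b J) (2 * J)"
    have "G (\<delta>(J := \<delta> J + t)) =
        (\<Sum>i = 0..K. smult (\<delta> i) (b i) + (if i = J then smult t (b J) else 0))"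
      unfolding G_def by (intro sum.cong refl) (simp add: smult_add_left)
    also have "\<dots> = G \<delta> + smult t (b J)"
      using Suc.prems by (simp add: G_def sum.distrib)
    finally have "G (\<delta>(J := \<delta> J + t)) = G \<delta> + smult t (b J)" .
    moreover have "coeff (b J) (2 * J) \<noteq> 0"
      using Suc.prems pivot by simp
    ultimately have "\<forall>j<Suc J. coeff (G (\<delta>(J := \<delta> J + t))) (2 * j) = coeff f (2 * j)"
      using IH lower by (auto simp: less_Suc_eq t_def)
    then show ?case
      by blast
  qed
  then show ?thesis
    unfolding G_def by (metis le_refl less_Suc_eq_le Suc_eq_plus1)
qed

lemma eq_0_if_condition_functional_eq_0:
  fixes h :: "'a::field_char_0 poly"
  assumes "degree h \<le> n"
    and even: "\<And>j. 2 * j \<le> n \<Longrightarrow> coeff h (2 * j) = 0"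
    and cond: "\<And>m. 1 \<le> m \<Longrightarrow> m \<le> (n + 1) div 2 \<Longrightarrow> condition_functional n m h = 0"
  shows "h = 0"
proof -
  have "coeff h e = 0" for e
  proof (induction e rule: less_induct)
    case (less e)
    consider "n < e" | "even e" "e \<le> n" | "odd e" "e \<le> n"
      by linarith
    then show ?case
    proof cases
      case 1
      then show ?thesis
        using assms(1) by (simp add: coeff_eq_0)
    next
      case 2
      then show ?thesis
        using even by (auto elim!: evenE)
    next
      case 3
      define m where "m = (e + 1) div 2"
      have "e = m + m - 1" "1 \<le> m" "m \<le> (n + 1) div 2"
        using 3 by (auto simp: m_def div_le_mono elim!: oddE)
      \<comment> \<open>only the term \<open>i = m\<close> of the \<open>m\<close>-th condition involves a coefficient of index \<open>\<ge> e\<close>\<close>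
      have "condition_functional n m h =
          of_nat (m choose m) / of_nat ((n + 1) choose (m + m)) * coeff h e
          + (\<Sum>i\<in>{0..m} - {m}. of_nat (m choose i) / of_nat ((n + 1) choose (m + i)) * coeff h (m + i - 1))"
        unfolding condition_functional_def \<open>e = m + m - 1\<close> by (subst sum.remove[of _ m]) auto
      also have "(\<Sum>i\<in>{0..m} - {m}. of_nat (m choose i) / of_nat ((n + 1) choose (m + i)) * coeff h (m + i - 1)) = 0"
        using \<open>e = m + m - 1\<close> by (intro sum.neutral) (auto intro!: less.IH)
      finally have "coeff h e / of_nat ((n + 1) choose (m + m)) = 0"
        using cond[OF \<open>1 \<le> m\<close> \<open>m \<le> (n + 1) div 2\<close>] by simp
      moreover have "(n + 1) choose (m + m) \<noteq> 0"
        using \<open>m \<le> (n + 1) div 2\<close> by simp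
      ultimately show ?thesis
        by simp
    qed
  qed
  then show ?thesis
    by (simp add: poly_eq_iff)
qed

lemma condition_functional_eq_0_iff_in_span:
  fixes f :: "'a::field_char_0 poly"
  assumes "degree f \<le> n"
  shows "(\<forall>m. 1 \<le> m \<and> m \<le> (n + 1) div 2 \<longrightarrow> condition_functional n m f = 0) \<longleftrightarrow>
    (\<exists>\<delta>. f = (\<Sum>i = 0..n div 2. smult (\<delta> i) ([:0, 1:] ^ (2 * i) * [:-2, 1:] ^ (n - 2 * i))))"
    (is "?cond f \<longleftrightarrow> (\<exists>\<delta>. f = ?G \<delta>)")
proof -
  have cond_G: "?cond (?G \<delta>)" for \<delta>
    by (auto simp: condition_functional_sum condition_functional_smult
        intro!: sum.neutral condition_functional_x_power_mult_x_minus_2_power)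
  show ?thesis
  proof
    assume "?cond f"
    have "\<exists>\<delta>. \<forall>j\<le>n div 2. coeff (?G \<delta>) (2 * j) = coeff f (2 * j)"
      by (rule exists_combination_matching_even_coeffs)
        (simp_all add: coeff_x_power_mult coeff_linear_poly_power_eq)
    then obtain \<delta> where \<delta>: "\<forall>j\<le>n div 2. coeff (?G \<delta>) (2 * j) = coeff f (2 * j)"
      by blast
    have "degree ([:0, 1:] ^ (2 * i) * [:-2, 1:] ^ (n - 2 * i) :: 'a poly) \<le> n" if "i \<le> n div 2" for i
      using that degree_x_power_mult_linear_power_le[of "2 * i" "-2 :: 'a" "n - 2 * i"] by simp
    then have "degree (?G \<delta>) \<le> n"
      by (intro degree_sum_le order.trans[OF degree_smult_le]) auto
    then have "f - ?G \<delta> = 0"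
      using \<open>?cond f\<close> cond_G \<delta> assms
      by (intro eq_0_if_condition_functional_eq_0[of _ n])
        (auto simp: condition_functional_diff intro!: degree_diff_le)
    then show "\<exists>\<delta>. f = ?G \<delta>"
      by auto
  qed (use cond_G in blast)
qed

theorem proposition4p9:
  fixes r :: int and f :: "'a :: field_char_0 poly"
  assumes "r < 0"
    and "degree f \<le> nat (- r)"
  shows "(\<forall>m::nat. 1 \<le> m \<and> m \<le> nat \<lceil>of_int (- r) / (2::rat)\<rceil> \<longrightarrow>
            (\<Sum>i = 0..m. of_nat (m choose i) / of_nat (nat (1 - r) choose (m + i))
                * coeff f (m + i - 1)) = (0::'a))
         \<longleftrightarrow>
         (\<exists>\<delta> :: nat \<Rightarrow> 'a.
            f = (\<Sum>i = 0..nat \<lfloor>of_int (- r) / (2::rat)\<rfloor>.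
                   smult (\<delta> i) ([:0, 1:] ^ (2 * i) * [:-2, 1:] ^ (nat (- r) - 2 * i))))"
proof -
  define n where "n = nat (- r)"
  have half: "(of_int (- r) :: rat) = of_nat n" and succ: "nat (1 - r) = n + 1"
    using assms(1) by (simp_all add: n_def)
  have "degree f \<le> n"
    using assms(2) by (simp add: n_def)
  then show ?thesis
    using condition_functional_eq_0_iff_in_span[of f n]
    unfolding half succ nat_ceiling_half nat_floor_half n_def[symmetric] condition_functional_def
    by blast
qed

end
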